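(* Let $1\leq\alpha\leq\theta<\omega_1$ and let $X,Y$ be $\mathbf{\Sigma}^0_\alpha$-isomorphic topological spaces. If the difference hierarchy $\{D_\beta(\mathbf{\Sigma}^0_\theta(X))\}_{\beta<\omega_1}$ does not collapse, then the difference hierarchy $\{D_\beta(\mathbf{\Sigma}^0_\theta(Y))\}_{\beta<\omega_1}$ does not collapse.
   Context: For a space $X$: $\mathbf{\Sigma}^0_0(X)=\{\emptyset\}$; $\mathbf{\Sigma}^0_1(X)$ the open sets; $\mathbf{\Sigma}^0_2(X)$ the countable unions of sets $U\setminus V$ with $U,V$ open; for $2<\alpha<\omega_1$, $\mathbf{\Sigma}^0_\alpha(X)$ the countable unions of complements of sets in $\bigcup_{\beta<\alpha}\mathbf{\Sigma}^0_\beta(X)$. An ordinal $\alpha=\lambda+n$ ($\lambda$ zero or limit, $n<\omega$) is even if $n$ is even and odd otherwise; $r(\alpha)=0$ if $\alpha$ is even, $1$ otherwise. $D_\beta(\{A_\gamma\}_{\gamma<\beta})=\bigcup\{A_\gamma\setminus\bigcup_{\delta<\gamma}A_\delta\mid\gamma<\beta,\ r(\gamma)\neq r(\beta)\}$, and $D_\beta(\mathcal{L})$ is the set of all such sets with all $A_\gamma\in\mathcal{L}$. The difference hierarchy $\{D_\beta(\mathbf{\Sigma}^0_\theta(X))\}_{\beta<\omega_1}$ collapses if for some $\beta<\omega_1$ the class $D_\beta(\mathbf{\Sigma}^0_\theta(X))$ coincides with the class of complements $\{X\setminus A\mid A\in D_\beta(\mathbf{\Sigma}^0_\theta(X))\}$.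 $X$ and $Y$ are $\mathbf{\Sigma}^0_\alpha$-isomorphic if there is a bijection $f:X\to Y$ such that $f^{-1}(A)\in\mathbf{\Sigma}^0_\alpha(X)$ for all $A\in\mathbf{\Sigma}^0_\alpha(Y)$ and $f(B)\in\mathbf{\Sigma}^0_\alpha(Y)$ for all $B\in\mathbf{\Sigma}^0_\alpha(X)$. *)

theory Defs
  imports "HOL-Analysis.Analysis"
begin

text \<open>Countable ordinals (ordinals below omega_1) are represented by well-orders
  on subsets of nat; comparison is ordLess / ordLeq (isomorphism-invariant).
  The order type of a well-order r is finite k iff Field r is finite of card k.\<close>

text \<open>Parity of an ordinal lambda+n: the elements with only finitely many strict
  successors are exactly the last n ones.\<close>
definition ord_even :: "'i rel \<Rightarrow> bool" where
  "ord_even r \<longleftrightarrow> even (card {x \<in> Field r. finite (aboveS r x)})"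

inductive borel_sigma :: "'a topology \<Rightarrow> nat rel \<Rightarrow> 'a set \<Rightarrow> bool"
  for X :: "'a topology" where
  sigma0: "Well_order r \<Longrightarrow> Field r = {} \<Longrightarrow> borel_sigma X r {}"
| sigma1: "Well_order r \<Longrightarrow> card (Field r) = 1 \<Longrightarrow> openin X A \<Longrightarrow> borel_sigma X r A"
| sigma2: "Well_order r \<Longrightarrow> finite (Field r) \<Longrightarrow> card (Field r) = 2 \<Longrightarrow> countable F \<Longrightarrow>
           (\<forall>C\<in>F. \<exists>U V. openin X U \<and> openin X V \<and> C = U - V) \<Longrightarrow> borel_sigma X r (\<Union>F)"
| sigmaN: "Well_order r \<Longrightarrow> (infinite (Field r) \<or> card (Field r) \<ge> 3) \<Longrightarrow> countable F \<Longrightarrow>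
           (\<forall>C\<in>F. \<exists>B s. (s, r) \<in> ordLess \<and> borel_sigma X s B \<and> C = topspace X - B) \<Longrightarrow>
           borel_sigma X r (\<Union>F)"

definition Sigma0 :: "'a topology \<Rightarrow> nat rel \<Rightarrow> 'a set set" where
  "Sigma0 X r = {A. borel_sigma X r A}"

text \<open>D_b({A_g}_{g<b}): the ordinals g<b are the elements x of Field b
  (g = order type of the initial segment below x).\<close>
definition diff_op :: "nat rel \<Rightarrow> (nat \<Rightarrow> 'a set) \<Rightarrow> 'a set" where
  "diff_op b A = \<Union>{A x - \<Union>{A y | y. y \<in> underS b x} | x.
      x \<in> Field b \<and> ord_even (Restr b (underS b x)) \<noteq> ord_even b}"

definition diff_class :: "nat rel \<Rightarrow> 'a set set \<Rightarrow> 'a set set" where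
  "diff_class b L = {diff_op b A | A. \<forall>x\<in>Field b. A x \<in> L}"

definition dual_class :: "'a topology \<Rightarrow> 'a set set \<Rightarrow> 'a set set" where
  "dual_class X L = {topspace X - S | S. S \<in> L}"

definition diff_hierarchy_collapses :: "'a topology \<Rightarrow> nat rel \<Rightarrow> bool" where
  "diff_hierarchy_collapses X t \<longleftrightarrow>
     (\<exists>b :: nat rel. Well_order b \<and>
        diff_class b (Sigma0 X t) = dual_class X (diff_class b (Sigma0 X t)))"

definition sigma_isomorphic :: "nat rel \<Rightarrow> 'a topology \<Rightarrow> 'b topology \<Rightarrow> bool" where
  "sigma_isomorphic a X Y \<longleftrightarrow>
     (\<exists>f. bij_betw f (topspace X) (topspace Y) \<and>
          (\<forall>A\<in>Sigma0 Y a. {x \<in> topspace X. f x \<in> A} \<in> Sigma0 X a) \<and>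
          (\<forall>B\<in>Sigma0 X a. f ` B \<in> Sigma0 Y a))"

end

theory Submission
  imports Defs
begin

text \<open>A \<open>\<Sigma>\<^sup>0\<^sub>\<alpha>\<close>-isomorphism \<open>f\<close> maps \<open>\<Sigma>\<^sup>0\<^sub>\<theta>(X)\<close> onto \<open>\<Sigma>\<^sup>0\<^sub>\<theta>(Y)\<close> for every
  \<open>\<theta> \<ge> \<alpha>\<close>: by induction on \<open>\<theta>\<close>, a complement of a \<open>\<Sigma>\<^sup>0\<^sub>\<beta>\<close> set with \<open>\<beta> < \<alpha>\<close> is pushed
  up into \<open>\<Sigma>\<^sup>0\<^sub>\<alpha>\<close>, where \<open>f\<close> is known to act, and every other constituent is handled by
  the induction hypothesis. Since \<open>f\<close> is a bijection of the underlying sets, it commutes with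
  the difference operations and with complements, so it carries a collapse of the difference
  hierarchy over \<open>Y\<close> back to one over \<open>X\<close>.\<close>

lemma ordLess_Well_order: "(r, r') \<in> ordLess \<Longrightarrow> Well_order r \<and> Well_order r'"
  using ordLeq_Well_order_simp[OF ordLess_imp_ordLeq] .

lemma ordIso_Well_order: "(r, r') \<in> ordIso \<Longrightarrow> Well_order r \<and> Well_order r'"
  using ordLeq_Well_order_simp[OF ordIso_imp_ordLeq] .

lemma ordLeq_finite_card_le:
  assumes "(r, r') \<in> ordLeq" "finite (Field r')"
  shows "finite (Field r) \<and> card (Field r) \<le> card (Field r')"
proof -
  have "\<exists>f. inj_on f (Field r) \<and> f ` Field r \<subseteq> Field r'"
    using card_of_mono2[OF assms(1)] by (simp only: card_of_ordLeq[symmetric])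
  then obtain f where inj: "inj_on f (Field r)" and sub: "f ` Field r \<subseteq> Field r'"
    by blast
  have "finite (Field r)" using finite_imageD[OF finite_subset[OF sub assms(2)] inj] .
  then show ?thesis using card_inj_on_le[OF inj sub assms(2)] by simp
qed

lemma ordIso_finite_card_eq:
  assumes "(r, r') \<in> ordIso"
  shows "finite (Field r) = finite (Field r') \<and> card (Field r) = card (Field r')"
proof -
  obtain f where "bij_betw f (Field r) (Field r')"
    using card_of_cong[OF assms] card_of_ordIso by blast
  then show ?thesis using bij_betw_finite bij_betw_same_card by blast
qed

lemma ordLess_finite_card_less:
  assumes "(r, r') \<in> ordLess" "finite (Field r')"
  shows "card (Field r) < card (Field r')"
proof -
  have "Well_order r" "Well_order r'" using ordLess_Well_order[OF assms(1)] by auto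
  then obtain x where x: "x \<in> Field r'" "(r, Restr r' (underS r' x)) \<in> ordIso"
    using ordLess_iff_ordIso_Restr assms(1) by blast
  have "card (Field r) = card (Field (Restr r' (underS r' x)))"
    using ordIso_finite_card_eq[OF x(2)] by simp
  also have "\<dots> \<le> card (underS r' x)"
    using underS_Field2[OF x(1)] assms(2)
    by (intro card_mono Field_Restr_subset) (auto intro: finite_subset)
  also have "\<dots> < card (Field r')"
    by (rule psubset_card_mono[OF assms(2) underS_Field2[OF x(1)]])
  finally show ?thesis .
qed

lemma finite_card_less_ordLess:
  assumes "Well_order r" "Well_order r'" "finite (Field r)"
    "infinite (Field r') \<or> card (Field r) < card (Field r')"
  shows "(r, r') \<in> ordLess"
proof (rule ccontr)
  assume "(r, r') \<notin> ordLess"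
  then have "(r', r) \<in> ordLeq" using not_ordLeq_iff_ordLess[OF assms(1,2)] by blast
  then show False using ordLeq_finite_card_le assms(3,4) by fastforce
qed

lemma borel_sigma_subset_topspace: "borel_sigma X r A \<Longrightarrow> A \<subseteq> topspace X"
  by (induction rule: borel_sigma.induct) (auto dest: openin_subset)

lemma borel_sigma_empty:
  assumes "Well_order r"
  shows "borel_sigma X r {}"
proof -
  have "Field r = {} \<or> card (Field r) = 1 \<or> (finite (Field r) \<and> card (Field r) = 2)
      \<or> infinite (Field r) \<or> card (Field r) \<ge> 3"
    using card_gt_0_iff[of "Field r"] by linarith
  then show ?thesis
    using assms borel_sigma.sigma0[of r X] borel_sigma.sigma1[of r X "{}"]
      borel_sigma.sigma2[of r "{}" X] borel_sigma.sigmaN[of r "{}" X] by auto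
qed

lemma borel_sigma_ordIso:
  "borel_sigma X r A \<Longrightarrow> (r, r') \<in> ordIso \<Longrightarrow> borel_sigma X r' A"
proof (induction arbitrary: r' rule: borel_sigma.induct)
  case (sigma0 r)
  then show ?case using borel_sigma_empty ordIso_Well_order by blast
next
  case (sigma1 r A)
  then show ?case using ordIso_finite_card_eq[of r r'] ordIso_Well_order[of r r']
    by (intro borel_sigma.sigma1) auto
next
  case (sigma2 r F)
  then show ?case using ordIso_finite_card_eq[of r r'] ordIso_Well_order[of r r']
    by (intro borel_sigma.sigma2) auto
next
  case (sigmaN r F)
  have "\<forall>C\<in>F. \<exists>B s. (s, r') \<in> ordLess \<and> borel_sigma X s B \<and> C = topspace X - B"
    using sigmaN.IH ordLess_ordIso_trans[OF _ sigmaN.prems] by blast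
  then show ?case using sigmaN ordIso_finite_card_eq[of r r'] ordIso_Well_order[of r r']
    by (intro borel_sigma.sigmaN) auto
qed

lemma borel_sigma_openin:
  "borel_sigma X r A \<Longrightarrow> card (Field r) = 1 \<Longrightarrow> openin X A"
  by (erule borel_sigma.cases) auto

lemma borel_sigma_diff:
  "\<lbrakk>Well_order r; finite (Field r); card (Field r) = 2; openin X U; openin X V\<rbrakk>
    \<Longrightarrow> borel_sigma X r (U - V)"
  using borel_sigma.sigma2[of r "{U - V}" X] by auto

lemma borel_sigma_compl_union:
  "\<lbrakk>Well_order r; finite (Field r); card (Field r) = 2; openin X U; openin X V\<rbrakk>
    \<Longrightarrow> borel_sigma X r ((topspace X - U) \<union> V)"
  using borel_sigma.sigma2[of r "{topspace X - U, V - {}}" X] by auto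

lemma Well_order_natLeq_on_2:
  "Well_order (natLeq_on 2)" "finite (Field (natLeq_on 2))" "card (Field (natLeq_on 2)) = 2"
  using natLeq_on_Well_order[of 2] by (simp_all add: Field_natLeq_on)

lemma borel_sigma_ordLess_mono:
  assumes "(s, a) \<in> ordLess" "borel_sigma X s B"
  shows "borel_sigma X a B"
  using assms(2)
proof (cases rule: borel_sigma.cases)
  case sigma0
  then show ?thesis using borel_sigma_empty ordLess_Well_order[OF assms(1)] by blast
next
  case sigma1
  have wa: "Well_order a" using ordLess_Well_order[OF assms(1)] by simp
  have ca: "infinite (Field a) \<or> card (Field a) > 1"
    using ordLess_finite_card_less[OF assms(1)] sigma1 by auto
  show ?thesis
  proof (cases "finite (Field a) \<and> card (Field a) = 2")
    case True
    then show ?thesis using borel_sigma_diff[OF wa _ _ sigma1(3), of "{}"] by simp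
  next
    case False
    \<comment> \<open>\<open>B\<close> is the complement of the \<open>\<Sigma>\<^sup>0\<^sub>2\<close> set \<open>topspace X - B\<close>.\<close>
    then have ca3: "infinite (Field a) \<or> card (Field a) \<ge> 3" using ca by auto
    have "(natLeq_on 2, a) \<in> ordLess"
      using finite_card_less_ordLess[OF Well_order_natLeq_on_2(1) wa Well_order_natLeq_on_2(2)]
        ca3 Well_order_natLeq_on_2(3) by auto
    moreover have "borel_sigma X (natLeq_on 2) (topspace X - B)"
      using borel_sigma_diff[OF Well_order_natLeq_on_2 openin_topspace sigma1(3)] .
    ultimately have "borel_sigma X a (\<Union>{topspace X - (topspace X - B)})"
      by (intro borel_sigma.sigmaN[OF wa ca3]) auto
    moreover have "topspace X - (topspace X - B) = B" using openin_subset[OF sigma1(3)] by blast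
    ultimately show ?thesis by simp
  qed
next
  case (sigma2 F)
  have wa: "Well_order a" using ordLess_Well_order[OF assms(1)] by simp
  have ca: "infinite (Field a) \<or> card (Field a) \<ge> 3"
    using ordLess_finite_card_less[OF assms(1)] sigma2(3,4) by auto
  have "\<exists>B s'. (s', a) \<in> ordLess \<and> borel_sigma X s' B \<and> C = topspace X - B" if "C \<in> F" for C
  proof -
    obtain U V where uv: "openin X U" "openin X V" "C = U - V" using sigma2(6) \<open>C \<in> F\<close> by blast
    then have "C = topspace X - ((topspace X - U) \<union> V)" using openin_subset[OF uv(1)] by blast
    then show ?thesis using borel_sigma_compl_union[OF sigma2(2,3,4) uv(1,2)] assms(1) by blast
  qed
  then show ?thesis unfolding \<open>B = \<Union>F\<close>
    by (intro borel_sigma.sigmaN[OF wa ca \<open>countable F\<close>] ballI)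
next
  case (sigmaN F)
  have wa: "Well_order a" using ordLess_Well_order[OF assms(1)] by simp
  have ca: "infinite (Field a) \<or> card (Field a) \<ge> 3"
    using ordLeq_finite_card_le[OF ordLess_imp_ordLeq[OF assms(1)]] sigmaN(3) by auto
  have "\<forall>C\<in>F. \<exists>B s'. (s', a) \<in> ordLess \<and> borel_sigma X s' B \<and> C = topspace X - B"
  proof
    fix C assume "C \<in> F"
    then obtain B s' where "(s', s) \<in> ordLess" "borel_sigma X s' B" "C = topspace X - B"
      using sigmaN(5) by blast
    then show "\<exists>B s'. (s', a) \<in> ordLess \<and> borel_sigma X s' B \<and> C = topspace X - B"
      using ordLess_transitive[OF _ assms(1)] by blast
  qed
  then show ?thesis unfolding \<open>B = \<Union>F\<close>
    by (rule borel_sigma.sigmaN[OF wa ca \<open>countable F\<close>])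
qed

locale Sigma0_preserving =
  fixes a :: "nat rel" and X :: "'a topology" and Y :: "'b topology" and f :: "'a \<Rightarrow> 'b"
  assumes Well_order_a: "Well_order a" and Field_a_nonempty: "Field a \<noteq> {}"
    and inj: "inj_on f (topspace X)" and image_topspace: "f ` topspace X = topspace Y"
    and preserves: "\<And>B. borel_sigma X a B \<Longrightarrow> borel_sigma Y a (f ` B)"
begin

lemma image_diff: "U \<subseteq> topspace X \<Longrightarrow> V \<subseteq> topspace X \<Longrightarrow> f ` (U - V) = f ` U - f ` V"
  using inj_on_image_set_diff[OF inj] by blast

lemma image_compl: "B \<subseteq> topspace X \<Longrightarrow> f ` (topspace X - B) = topspace Y - f ` B"
  using image_diff image_topspace by simp

lemma openin_image:
  assumes "card (Field a) = 1" "openin X U"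
  shows "openin Y (f ` U)"
  using borel_sigma_openin[OF preserves[OF borel_sigma.sigma1[OF Well_order_a assms]] assms(1)] .

lemma borel_sigma_image_ordIso:
  assumes "borel_sigma X t B" "(a, t) \<in> ordIso"
  shows "borel_sigma Y t (f ` B)"
  using borel_sigma_ordIso[OF preserves assms(2)]
    borel_sigma_ordIso[OF assms(1) ordIso_symmetric[OF assms(2)]] .

lemma borel_sigma_image_ordLess:
  assumes "borel_sigma X t B" "(a, t) \<in> ordLess"
  shows "borel_sigma Y t (f ` B)"
  using assms
proof (induction rule: borel_sigma.induct)
  case (sigma0 r)
  show ?case using borel_sigma_empty[OF sigma0.hyps(1)] by simp
next
  case (sigma1 r A)
  have "finite (Field r)" using sigma1.hyps(2) by (intro card_ge_0_finite) simp
  then have "finite (Field a)" "card (Field a) < 1"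
    using ordLeq_finite_card_le[OF ordLess_imp_ordLeq[OF sigma1.prems]]
      ordLess_finite_card_less[OF sigma1.prems] sigma1.hyps(2) by auto
  then show ?case using Field_a_nonempty by simp
next
  case (sigma2 r F)
  have "finite (Field a)" "card (Field a) < 2"
    using ordLeq_finite_card_le[OF ordLess_imp_ordLeq[OF sigma2.prems]]
      ordLess_finite_card_less[OF sigma2.prems] sigma2.hyps(2,3) by auto
  then have card_a: "card (Field a) = 1" using Field_a_nonempty by (simp add: less_2_cases_iff)
  have "\<exists>U V. openin Y U \<and> openin Y V \<and> f ` C = U - V" if "C \<in> F" for C
  proof -
    obtain U V where U: "openin X U" and V: "openin X V" and "C = U - V"
      using sigma2.hyps(5) \<open>C \<in> F\<close> by blast
    then have "f ` C = f ` U - f ` V" using image_diff openin_subset by blast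
    then show ?thesis using openin_image[OF card_a U] openin_image[OF card_a V] by blast
  qed
  then have "borel_sigma Y r (\<Union>((`) f ` F))"
    using sigma2.hyps by (intro borel_sigma.sigma2) auto
  then show ?case by (simp add: image_Union)
next
  case (sigmaN r F)
  have "\<exists>B' s'. (s', r) \<in> ordLess \<and> borel_sigma Y s' B' \<and> f ` C = topspace Y - B'"
    if "C \<in> F" for C
  proof -
    obtain B s where s: "(s, r) \<in> ordLess" and B: "borel_sigma X s B" "C = topspace X - B"
      and IH: "(a, s) \<in> ordLess \<Longrightarrow> borel_sigma Y s (f ` B)"
      using sigmaN.IH \<open>C \<in> F\<close> by blast
    have C: "f ` C = topspace Y - f ` B"
      using image_compl[OF borel_sigma_subset_topspace[OF B(1)]] B(2) by simp
    have "Well_order s" using ordLess_Well_order[OF s] by simp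
    then consider "(a, s) \<in> ordLess" | "(a, s) \<in> ordIso" | "(s, a) \<in> ordLess"
      using ordLeq_iff_ordLess_or_ordIso not_ordLeq_iff_ordLess[OF _ Well_order_a] by blast
    then show ?thesis
    proof cases
      case 1
      then show ?thesis using IH s C by blast
    next
      case 2
      then show ?thesis using borel_sigma_image_ordIso[OF B(1)] s C by blast
    next
      \<comment> \<open>Below \<open>a\<close> the induction hypothesis is unavailable; lift \<open>B\<close> into level \<open>a\<close> instead.\<close>
      case 3
      have "borel_sigma Y a (f ` B)" using preserves[OF borel_sigma_ordLess_mono[OF 3 B(1)]] .
      then show ?thesis using sigmaN.prems C by blast
    qed
  qed
  then have "borel_sigma Y r (\<Union>((`) f ` F))"
    using sigmaN.hyps by (intro borel_sigma.sigmaN) auto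
  then show ?case by (simp add: image_Union)
qed

lemma borel_sigma_image:
  "borel_sigma X t B \<Longrightarrow> (a, t) \<in> ordLeq \<Longrightarrow> borel_sigma Y t (f ` B)"
  using ordLeq_iff_ordLess_or_ordIso borel_sigma_image_ordLess borel_sigma_image_ordIso by blast

end

lemma sigma_isomorphic_Sigma0_image:
  assumes "Well_order a" "Field a \<noteq> {}" "(a, t) \<in> ordLeq" "sigma_isomorphic a X Y"
  shows "\<exists>f. bij_betw f (topspace X) (topspace Y) \<and> Sigma0 Y t = (`) f ` Sigma0 X t"
proof -
  obtain f where bij: "bij_betw f (topspace X) (topspace Y)"
    and pre: "\<forall>B\<in>Sigma0 Y a. {x \<in> topspace X. f x \<in> B} \<in> Sigma0 X a"
    and fw: "\<forall>B\<in>Sigma0 X a. f ` B \<in> Sigma0 Y a"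
    using assms(4) unfolding sigma_isomorphic_def by blast
  have inj: "inj_on f (topspace X)" and img: "f ` topspace X = topspace Y"
    using bij unfolding bij_betw_def by auto
  define g where "g = inv_into (topspace X) f"
  have preimage: "{x \<in> topspace X. f x \<in> B} = g ` B" if "B \<subseteq> topspace Y" for B
  proof -
    have "f ` {x \<in> topspace X. f x \<in> B} = B" using that img by (auto simp: subset_eq image_iff)
    then show ?thesis
      unfolding g_def using inv_into_image_cancel[OF inj, of "{x \<in> topspace X. f x \<in> B}"] by auto
  qed
  interpret fwd: Sigma0_preserving a X Y f
    by unfold_locales (use assms(1,2) inj img fw in \<open>auto simp: Sigma0_def\<close>)
  interpret bwd: Sigma0_preserving a Y X g
  proof unfold_locales
    show "inj_on g (topspace Y)" "g ` topspace Y = topspace X"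
      using bij_betw_inv_into[OF bij] unfolding g_def bij_betw_def by auto
    fix B assume "borel_sigma Y a B"
    then show "borel_sigma X a (g ` B)"
      using pre preimage[OF borel_sigma_subset_topspace] by (simp add: Sigma0_def)
  qed (use assms(1,2) in auto)
  have "Sigma0 Y t \<subseteq> (`) f ` Sigma0 X t"
  proof
    fix C assume "C \<in> Sigma0 Y t"
    then have C: "borel_sigma Y t C" by (simp add: Sigma0_def)
    have "f ` g ` C = C"
      unfolding g_def using image_inv_into_cancel[OF img borel_sigma_subset_topspace[OF C]] .
    moreover have "g ` C \<in> Sigma0 X t"
      using bwd.borel_sigma_image[OF C assms(3)] by (simp add: Sigma0_def)
    ultimately show "C \<in> (`) f ` Sigma0 X t" by (rule image_eqI[OF sym])
  qed
  moreover have "(`) f ` Sigma0 X t \<subseteq> Sigma0 Y t"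
    using fwd.borel_sigma_image assms(3) by (auto simp: Sigma0_def)
  ultimately show ?thesis using bij by blast
qed

lemma diff_op_UN:
  "diff_op b A = (\<Union>x\<in>{x. x \<in> Field b \<and> ord_even (Restr b (underS b x)) \<noteq> ord_even b}.
    A x - (\<Union>y\<in>underS b x. A y))"
  unfolding diff_op_def by blast

lemma diff_op_cong: "(\<And>x. x \<in> Field b \<Longrightarrow> A x = A' x) \<Longrightarrow> diff_op b A = diff_op b A'"
  unfolding diff_op_UN
  by (intro SUP_cong refl arg_cong2[where f = minus]) (auto dest: underS_Field)

lemma image_diff_op:
  assumes inj: "inj_on f S" and sub: "\<And>x. x \<in> Field b \<Longrightarrow> A x \<subseteq> S"
  shows "f ` diff_op b A = diff_op b (\<lambda>x. f ` A x)"
proof -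
  have diff: "f ` (A x - (\<Union>y\<in>underS b x. A y)) = f ` A x - (\<Union>y\<in>underS b x. f ` A y)"
    if "x \<in> Field b" for x
  proof -
    have earlier: "(\<Union>y\<in>underS b x. A y) \<subseteq> S" using sub underS_Field[of _ b x] by blast
    have "f ` (A x - (\<Union>y\<in>underS b x. A y)) = f ` A x - f ` (\<Union>y\<in>underS b x. A y)"
      using inj_on_image_set_diff[OF inj _ earlier] sub[OF that] by blast
    then show ?thesis by (simp add: image_UN)
  qed
  show ?thesis unfolding diff_op_UN image_UN
    by (rule SUP_cong[OF refl]) (use diff in blast)
qed

lemma diff_class_image:
  assumes inj: "inj_on f S" and L: "L \<subseteq> Pow S"
  shows "diff_class b ((`) f ` L) = (`) f ` diff_class b L"
proof
  show "(`) f ` diff_class b L \<subseteq> diff_class b ((`) f ` L)"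
  proof
    fix D assume "D \<in> (`) f ` diff_class b L"
    then obtain A where A: "\<forall>x\<in>Field b. A x \<in> L" and D: "D = f ` diff_op b A"
      unfolding diff_class_def by blast
    have "\<And>x. x \<in> Field b \<Longrightarrow> A x \<subseteq> S" using A L by blast
    then have "D = diff_op b (\<lambda>x. f ` A x)" unfolding D by (rule image_diff_op[OF inj])
    then show "D \<in> diff_class b ((`) f ` L)" using A unfolding diff_class_def by blast
  qed
next
  show "diff_class b ((`) f ` L) \<subseteq> (`) f ` diff_class b L"
  proof
    fix D assume "D \<in> diff_class b ((`) f ` L)"
    then obtain A' where A': "\<forall>x\<in>Field b. A' x \<in> (`) f ` L" and D: "D = diff_op b A'"
      unfolding diff_class_def by blast
    have "\<forall>x\<in>Field b. \<exists>A0. A0 \<in> L \<and> A' x = f ` A0" using A' by blast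
    then obtain A where A: "\<forall>x\<in>Field b. A x \<in> L \<and> A' x = f ` A x"
      by (rule bchoice[elim_format]) blast
    have "D = diff_op b (\<lambda>x. f ` A x)" unfolding D by (rule diff_op_cong) (use A in blast)
    also have "\<dots> = f ` diff_op b A" by (rule image_diff_op[OF inj, symmetric]) (use A L in blast)
    finally have "D = f ` diff_op b A" .
    moreover have "diff_op b A \<in> diff_class b L" unfolding diff_class_def using A by blast
    ultimately show "D \<in> (`) f ` diff_class b L" by (rule image_eqI)
  qed
qed

lemma diff_class_subset_Pow:
  assumes "L \<subseteq> Pow S"
  shows "diff_class b L \<subseteq> Pow S"
proof
  fix D assume "D \<in> diff_class b L"
  then obtain A where A: "\<forall>x\<in>Field b. A x \<in> L" and D: "D = diff_op b A"
    unfolding diff_class_def by blast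
  have "D \<subseteq> (\<Union>x\<in>Field b. A x)" unfolding D diff_op_UN by blast
  also have "\<dots> \<subseteq> S" using A assms by blast
  finally show "D \<in> Pow S" by simp
qed

lemma dual_class_eq_image: "dual_class X M = (\<lambda>S. topspace X - S) ` M"
  unfolding dual_class_def by blast

lemma dual_class_image:
  assumes inj: "inj_on f (topspace X)" and img: "f ` topspace X = topspace Y"
    and M: "M \<subseteq> Pow (topspace X)"
  shows "dual_class Y ((`) f ` M) = (`) f ` dual_class X M"
proof -
  have "f ` (topspace X - S) = topspace Y - f ` S" if "S \<in> M" for S
  proof -
    have "S \<subseteq> topspace X" using M that by blast
    then show ?thesis using inj_on_image_set_diff[OF inj Diff_subset] img by simp
  qed
  then show ?thesis unfolding dual_class_eq_image image_image by (intro image_cong refl) simp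
qed

lemma diff_hierarchy_collapses_image:
  assumes bij: "bij_betw f (topspace X) (topspace Y)" and Sigma0: "Sigma0 Y t = (`) f ` Sigma0 X t"
  shows "diff_hierarchy_collapses Y t \<longleftrightarrow> diff_hierarchy_collapses X t"
proof -
  have inj: "inj_on f (topspace X)" and img: "f ` topspace X = topspace Y"
    using bij unfolding bij_betw_def by auto
  have L: "Sigma0 X t \<subseteq> Pow (topspace X)"
    using borel_sigma_subset_topspace by (auto simp: Sigma0_def)
  have "diff_class b (Sigma0 Y t) = dual_class Y (diff_class b (Sigma0 Y t)) \<longleftrightarrow>
        diff_class b (Sigma0 X t) = dual_class X (diff_class b (Sigma0 X t))" for b
  proof -
    let ?D = "diff_class b (Sigma0 X t)"
    have D: "?D \<subseteq> Pow (topspace X)" using diff_class_subset_Pow[OF L] .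
    moreover have "dual_class X ?D \<subseteq> Pow (topspace X)" unfolding dual_class_def by blast
    ultimately show ?thesis
      unfolding Sigma0 diff_class_image[OF inj L] dual_class_image[OF inj img D]
      by (simp add: inj_on_image_eq_iff[OF inj_on_image_Pow[OF inj]])
  qed
  then show ?thesis unfolding diff_hierarchy_collapses_def by simp
qed

theorem lemma4p4:
  fixes a t :: "nat rel" and X :: "'a topology" and Y :: "'b topology"
  assumes "Well_order a" and "Well_order t"
    and "Field a \<noteq> {}"
    and "(a, t) \<in> ordLeq"
    and "sigma_isomorphic a X Y"
    and "\<not> diff_hierarchy_collapses X t"
  shows "\<not> diff_hierarchy_collapses Y t"
proof -
  obtain f where "bij_betw f (topspace X) (topspace Y)" "Sigma0 Y t = (`) f ` Sigma0 X t"
    using sigma_isomorphic_Sigma0_image[OF assms(1,3,4,5)] by blast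
  then show ?thesis using diff_hierarchy_collapses_image assms(6) by metis
qed

end
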